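(* Let $m,s,t\in\mathbb{N}_0$ and let $e\in\mathbb{Z}$ with $-t\le e\le s$. Then \[ \begin{bmatrix}m\\ t\end{bmatrix}_q\begin{bmatrix}m+e\\ s\end{bmatrix}_q=\sum_{j\geq 0}q^{(s-j)(t+e-j)}\begin{bmatrix}t+e\\ j\end{bmatrix}_q\begin{bmatrix}s-e\\ s-j\end{bmatrix}_q\begin{bmatrix}m+j\\ s+t\end{bmatrix}_q \] as an identity of polynomials in $q$ (equivalently, for every $q\in\mathbb{C}$).
   Context: For $n\in\mathbb{N}_0$ the $q$-integer is $[n]_q=1+q+\dots+q^{n-1}=\frac{q^n-1}{q-1}$, the $q$-factorial is $[n]_q!=[n]_q[n-1]_q\cdots[1]_q$, and for $n,k\in\mathbb{N}_0$ with $k\le n$ the $q$-binomial coefficient is $\begin{bmatrix}n\\ k\end{bmatrix}_q=\frac{[n]_q!}{[k]_q![n-k]_q!}$, a polynomial in $q$. By convention $\begin{bmatrix}n\\ k\end{bmatrix}_q=0$ whenever $n<k$ (for $k\ge 0$; in particular whenever the top entry $n$ is negative). *)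

theory Defs
  imports "HOL-Computational_Algebra.Polynomial"
begin

definition qint :: "nat \<Rightarrow> complex poly" where
  "qint n = (\<Sum>i<n. monom 1 i)"

definition qfact :: "nat \<Rightarrow> complex poly" where
  "qfact n = (\<Prod>i\<in>{1..n}. qint i)"

definition qbinom :: "int \<Rightarrow> int \<Rightarrow> complex poly" where
  "qbinom n k = (if 0 \<le> k \<and> k \<le> n
     then qfact (nat n) div (qfact (nat k) * qfact (nat (n - k))) else 0)"

end

theory Submission
  imports Defs
begin

text \<open>Write \<open>n = t + e\<close>, \<open>r = s - e\<close> (so \<open>n + r = s + t\<close>) and \<open>m = p + t\<close>; if \<open>m < t\<close> both
  sides vanish. Expanding \<open>[m + j, s + t]\<close> by the q-Vandermonde identity and exchanging the
  sums, the sum over \<open>j\<close> collapses, by trinomial revision \<open>[n, j][j, k] = [n, k][n - k, j - k]\<close>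
  and Vandermonde again, to \<open>[n, k][s + t - k, s - k]\<close>. A second trinomial revision turns
  \<open>[m, s + t - k][s + t - k, s - k]\<close> into \<open>[m, t][p, s - k]\<close>, and a last Vandermonde summation
  over \<open>k\<close> gives \<open>[m, t][p + n, s] = [m, t][m + e, s]\<close>.
  Vandermonde holds for every \<open>q\<close> and is proved from the Pascal recursion; symmetry and
  trinomial revision are derived from the factorial formula, hence only for the variable \<open>q\<close>.\<close>

fun gauss_binom :: "'a::comm_semiring_1 \<Rightarrow> nat \<Rightarrow> nat \<Rightarrow> 'a" where
  "gauss_binom q n 0 = 1"
| "gauss_binom q 0 (Suc k) = 0"
| "gauss_binom q (Suc n) (Suc k) = gauss_binom q n k + q ^ Suc k * gauss_binom q n (Suc k)"

lemma gauss_binom_eq_0: "n < k \<Longrightarrow> gauss_binom q n k = 0"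
  by (induction q n k rule: gauss_binom.induct) auto

lemma gauss_binom_self [simp]: "gauss_binom q n n = 1"
  by (induction n) (simp_all add: gauss_binom_eq_0)

lemma gauss_binom_weighted_pascal:
  assumes "i \<le> K"
  shows "q ^ (i * (Suc b + i - Suc K)) * gauss_binom q (Suc b) (Suc K - i) =
    q ^ (i * (b + i - K)) * gauss_binom q b (K - i)
    + q ^ Suc K * (q ^ (i * (b + i - Suc K)) * gauss_binom q b (Suc K - i))"
proof -
  have "Suc K - i = Suc (K - i)" and "i * (Suc b + i - Suc K) = i * (b + i - K)"
    using assms by simp_all
  then have "q ^ (i * (Suc b + i - Suc K)) * gauss_binom q (Suc b) (Suc K - i) =
      q ^ (i * (b + i - K)) * gauss_binom q b (K - i)
      + q ^ (i * (b + i - K) + Suc (K - i)) * gauss_binom q b (Suc (K - i))"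
    by (simp only: gauss_binom.simps(3) power_add distrib_left mult_ac)
  also have "q ^ (i * (b + i - K) + Suc (K - i)) * gauss_binom q b (Suc (K - i)) =
      q ^ Suc K * (q ^ (i * (b + i - Suc K)) * gauss_binom q b (Suc K - i))"
  proof (cases "Suc K \<le> b + i")
    case True
    then obtain d where "b + i = Suc K + d"
      using le_Suc_ex by blast
    then have "i * (b + i - K) + Suc (K - i) = Suc K + i * (b + i - Suc K)"
      using assms by simp
    then show ?thesis
      using assms by (simp add: Suc_diff_le power_add mult_ac)
  qed (use assms in \<open>simp add: gauss_binom_eq_0\<close>)
  finally show ?thesis .
qed

text \<open>The truncated subtraction in the exponent is harmless: when \<open>b + i < K\<close> the factor
  \<open>gauss_binom q b (K - i)\<close> vanishes.\<close>

lemma gauss_binom_vandermonde: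
  "gauss_binom q (a + b) K =
     (\<Sum>i\<le>K. q ^ (i * (b + i - K)) * gauss_binom q a i * gauss_binom q b (K - i))"
proof (induction b arbitrary: K)
  case 0
  have "(\<Sum>i\<le>K. q ^ (i * (i - K)) * gauss_binom q a i * gauss_binom q 0 (K - i)) =
      (\<Sum>i\<le>K. if i = K then gauss_binom q a K else 0)"
    by (rule sum.cong) (auto simp: gauss_binom_eq_0)
  then show ?case by simp
next
  case (Suc b)
  define T where "T c L i = q ^ (i * (c + i - L)) * gauss_binom q a i * gauss_binom q c (L - i)"
    for c L i
  show ?case
  proof (cases K)
    case 0
    then show ?thesis by simp
  next
    case (Suc K')
    have pascal: "T (Suc b) K i = T b K' i + q ^ K * T b K i" if "i \<le> K'" for i
      using gauss_binom_weighted_pascal[OF that, of q b] Suc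
      by (simp add: T_def distrib_left mult_ac)
    have top: "T (Suc b) K K = q ^ K * T b K K"
      by (simp add: T_def power_add mult_ac)
    have "gauss_binom q (a + Suc b) K = sum (T b K') {..K'} + q ^ K * sum (T b K) {..K}"
      using Suc.IH Suc by (simp add: T_def)
    also have "\<dots> = (\<Sum>i\<le>K'. T b K' i + q ^ K * T b K i) + q ^ K * T b K K"
      using Suc by (simp add: sum.distrib sum_distrib_left distrib_left add.assoc)
    also have "\<dots> = (\<Sum>i\<le>K'. T (Suc b) K i) + T (Suc b) K K"
      by (simp add: pascal top)
    also have "\<dots> = sum (T (Suc b) K) {..K}"
      using Suc by simp
    finally show ?thesis by (simp add: T_def)
  qed
qed

lemma gauss_binom_vandermonde':
  "gauss_binom q (a + b) K =
     (\<Sum>i\<le>K. q ^ ((K - i) * (a - i)) * gauss_binom q a i * gauss_binom q b (K - i))"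
proof -
  have "gauss_binom q (a + b) K =
      (\<Sum>i\<le>K. q ^ (i * (a + i - K)) * gauss_binom q b i * gauss_binom q a (K - i))"
    using gauss_binom_vandermonde[of q b a K] by (simp add: add.commute)
  also have "\<dots> = (\<Sum>i\<le>K. q ^ ((K - i) * (a - i)) * gauss_binom q a i * gauss_binom q b (K - i))"
    by (rule sum.reindex_bij_witness[where i="\<lambda>i. K - i" and j="\<lambda>i. K - i"])
      (auto simp: mult_ac)
  finally show ?thesis .
qed

abbreviation qvar :: "complex poly" where
  "qvar \<equiv> [:0, 1:]"

lemma qint_0 [simp]: "qint 0 = 0"
  by (simp add: qint_def)

lemma qfact_0 [simp]: "qfact 0 = 1"
  by (simp add: qfact_def)

lemma qint_Suc: "qint (Suc n) = qint n + qvar ^ n"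
  by (simp add: qint_def monom_altdef)

lemma qint_add: "qint (a + b) = qint a + qvar ^ a * qint b"
  by (induction b) (simp_all add: qint_Suc algebra_simps power_add)

lemma qfact_Suc: "qfact (Suc n) = qint (Suc n) * qfact n"
  by (simp add: qfact_def prod.nat_ivl_Suc' mult.commute)

lemma qfact_nonzero: "qfact n \<noteq> 0"
proof -
  have "coeff (qint (Suc k)) 0 = 1" for k
    by (simp add: qint_def coeff_sum)
  then have "qint (Suc k) \<noteq> 0" for k
    by (metis coeff_0 zero_neq_one)
  then show ?thesis
    by (induction n) (simp_all add: qfact_Suc)
qed

lemma qfact_add: "qfact (a + b) = gauss_binom qvar (a + b) a * qfact a * qfact b"
proof (induction "a + b" arbitrary: a b)
  case 0
  then show ?case by simp
next
  case (Suc n)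
  show ?case
  proof (cases a)
    case 0
    then show ?thesis by simp
  next
    case a: (Suc a')
    show ?thesis
    proof (cases b)
      case 0
      then show ?thesis by simp
    next
      case b: (Suc b')
      have n: "n = a' + b" "n = a + b'"
        using Suc.hyps a b by simp_all
      have "gauss_binom qvar (a + b) a * qfact a * qfact b
          = (gauss_binom qvar n a' * qfact a' * qfact b) * qint a
            + qvar ^ a * (gauss_binom qvar n a * qfact a * qfact b') * qint b"
        using a b n by (simp add: qfact_Suc algebra_simps)
      also have "\<dots> = qfact n * (qint a + qvar ^ a * qint b)"
        using Suc.hyps(1)[OF n(1)] Suc.hyps(1)[OF n(2)] n by (simp add: algebra_simps)
      also have "\<dots> = qfact (a + b)"
        by (metis Suc.hyps(2) qfact_Suc qint_add mult.commute)
      finally show ?thesis ..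
    qed
  qed
qed

lemma qbinom_of_nat: "qbinom (int n) (int k) = gauss_binom qvar n k"
proof (cases "k \<le> n")
  case True
  then obtain c where "n = k + c"
    using le_Suc_ex by blast
  then show ?thesis
    using qfact_add[of k c] qfact_nonzero by (simp add: qbinom_def nat_add_distrib mult.assoc)
qed (simp add: qbinom_def gauss_binom_eq_0)

lemma gauss_binom_symmetric: "gauss_binom qvar (a + b) b = gauss_binom qvar (a + b) a"
proof -
  have "gauss_binom qvar (a + b) b * (qfact a * qfact b) = qfact (a + b)"
    using qfact_add[of b a] by (simp add: ac_simps)
  moreover have "gauss_binom qvar (a + b) a * (qfact a * qfact b) = qfact (a + b)"
    using qfact_add[of a b] by (simp add: ac_simps)
  ultimately show ?thesis
    using qfact_nonzero by (metis mult_right_cancel no_zero_divisors)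
qed

lemma gauss_binom_trinomial:
  "gauss_binom qvar (k + n) (k + j) * gauss_binom qvar (k + j) k =
     gauss_binom qvar (k + n) k * gauss_binom qvar n j"
proof (cases "j \<le> n")
  case True
  then obtain c where n: "n = j + c"
    using le_Suc_ex by blast
  have "(gauss_binom qvar (k + n) (k + j) * gauss_binom qvar (k + j) k) * (qfact k * qfact j * qfact c)
      = qfact (k + n)"
    using qfact_add[of "k + j" c] qfact_add[of k j] n by (simp add: ac_simps)
  moreover have "(gauss_binom qvar (k + n) k * gauss_binom qvar n j) * (qfact k * qfact j * qfact c)
      = qfact (k + n)"
    using qfact_add[of k n] qfact_add[of j c] n by (simp add: ac_simps)
  ultimately show ?thesis
    using qfact_nonzero by (metis mult_right_cancel no_zero_divisors)
qed (simp add: gauss_binom_eq_0)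

lemma sum_vandermonde_mult_gauss_binom:
  assumes "k \<le> s"
  shows "(\<Sum>j\<le>s. qvar ^ ((s - j) * (n - j)) * gauss_binom qvar n j * gauss_binom qvar r (s - j)
            * gauss_binom qvar j k)
         = gauss_binom qvar n k * gauss_binom qvar (n + r - k) (s - k)"
proof (cases "k \<le> n")
  case False
  then have vanish: "qvar ^ ((s - j) * (n - j)) * gauss_binom qvar n j * gauss_binom qvar r (s - j)
      * gauss_binom qvar j k = 0" for j
    by (cases "j \<le> n") (simp_all add: gauss_binom_eq_0)
  from False show ?thesis
    by (simp only: vanish sum.neutral_const) (simp add: gauss_binom_eq_0)
next
  case True
  then obtain n' where n: "n = k + n'"
    using le_Suc_ex by blast
  obtain s' where s: "s = k + s'"
    using assms le_Suc_ex by blast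
  define f where "f j = qvar ^ ((s - j) * (n - j)) * gauss_binom qvar n j * gauss_binom qvar r (s - j)
      * gauss_binom qvar j k" for j
  have "sum f {..s} = sum f {k..s}"
    by (rule sum.mono_neutral_right) (auto simp: f_def gauss_binom_eq_0)
  also have "\<dots> = (\<Sum>i\<le>s'. f (k + i))"
    using s by (simp add: atLeast0AtMost[symmetric] sum.shift_bounds_cl_nat_ivl[symmetric] add.commute)
  also have "\<dots> = (\<Sum>i\<le>s'. gauss_binom qvar n k *
      (qvar ^ ((s' - i) * (n' - i)) * gauss_binom qvar n' i * gauss_binom qvar r (s' - i)))"
  proof (rule sum.cong)
    fix i
    have "f (k + i) = qvar ^ ((s' - i) * (n' - i)) * gauss_binom qvar r (s' - i)
        * (gauss_binom qvar (k + n') (k + i) * gauss_binom qvar (k + i) k)"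
      by (simp add: f_def n s mult_ac)
    then show "f (k + i) = gauss_binom qvar n k *
        (qvar ^ ((s' - i) * (n' - i)) * gauss_binom qvar n' i * gauss_binom qvar r (s' - i))"
      by (simp only: gauss_binom_trinomial n) (simp add: mult_ac)
  qed simp
  also have "\<dots> = gauss_binom qvar n k * gauss_binom qvar (n' + r) s'"
    by (simp add: gauss_binom_vandermonde' sum_distrib_left)
  finally show ?thesis
    by (simp add: f_def n s)
qed

lemma gauss_binom_product_expansion:
  assumes "n + r = s + t"
  shows "gauss_binom qvar (p + t) t * gauss_binom qvar (p + n) s =
    (\<Sum>j\<le>s. qvar ^ ((s - j) * (n - j)) * gauss_binom qvar n j * gauss_binom qvar r (s - j)
       * gauss_binom qvar (p + t + j) (s + t))"
proof -
  define w where "w j = qvar ^ ((s - j) * (n - j)) * gauss_binom qvar n j * gauss_binom qvar r (s - j)"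
    for j
  define c where "c k = qvar ^ (k * (p + k - s)) * gauss_binom qvar (p + t) (s + t - k)" for k
  have expand: "gauss_binom qvar (p + t + j) (s + t) = (\<Sum>k\<le>s. c k * gauss_binom qvar j k)"
    if "j \<le> s" for j
  proof -
    have "gauss_binom qvar (j + (p + t)) (s + t) = (\<Sum>k\<le>s + t. c k * gauss_binom qvar j k)"
      by (simp add: gauss_binom_vandermonde[of qvar j] c_def mult_ac)
    also have "\<dots> = (\<Sum>k\<le>s. c k * gauss_binom qvar j k)"
      using that by (intro sum.mono_neutral_right) (auto simp: gauss_binom_eq_0)
    finally show ?thesis
      by (simp only: add.commute[of "p + t" j])
  qed
  have "(\<Sum>j\<le>s. w j * gauss_binom qvar (p + t + j) (s + t))
      = (\<Sum>j\<le>s. \<Sum>k\<le>s. w j * (c k * gauss_binom qvar j k))"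
    by (intro sum.cong refl) (simp add: expand sum_distrib_left)
  also have "\<dots> = (\<Sum>k\<le>s. c k * (\<Sum>j\<le>s. w j * gauss_binom qvar j k))"
    by (subst sum.swap) (simp add: sum_distrib_left mult_ac)
  also have "\<dots> = (\<Sum>k\<le>s. c k * (gauss_binom qvar n k * gauss_binom qvar (n + r - k) (s - k)))"
    by (intro sum.cong refl) (simp add: w_def sum_vandermonde_mult_gauss_binom)
  also have "\<dots> = (\<Sum>k\<le>s. gauss_binom qvar (p + t) t *
      (qvar ^ (k * (p + k - s)) * gauss_binom qvar n k * gauss_binom qvar p (s - k)))"
  proof (intro sum.cong refl)
    fix k assume "k \<in> {..s}"
    then have "s + t - k = t + (s - k)" and "n + r - k = t + (s - k)"
      using assms by simp_all
    then have "gauss_binom qvar (p + t) (s + t - k) * gauss_binom qvar (n + r - k) (s - k)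
        = gauss_binom qvar (p + t) t * gauss_binom qvar p (s - k)"
      using gauss_binom_trinomial[of t p "s - k"] gauss_binom_symmetric[of t "s - k"]
      by (simp add: add.commute)
    then show "c k * (gauss_binom qvar n k * gauss_binom qvar (n + r - k) (s - k)) =
        gauss_binom qvar (p + t) t *
          (qvar ^ (k * (p + k - s)) * gauss_binom qvar n k * gauss_binom qvar p (s - k))"
      by (simp add: c_def mult_ac)
  qed
  also have "\<dots> = gauss_binom qvar (p + t) t * gauss_binom qvar (n + p) s"
    by (simp add: gauss_binom_vandermonde[of qvar n p s] sum_distrib_left)
  finally show ?thesis
    by (simp add: w_def add.commute)
qed

lemma qbinom_sum_as_gauss_binom_sum:
  "(\<Sum>j\<in>{j. j \<le> s \<and> int j \<le> int n}. qvar ^ nat ((int s - int j) * (int n - int j))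
      * qbinom (int n) (int j) * qbinom (int r) (int s - int j) * g j)
   = (\<Sum>j\<le>s. qvar ^ ((s - j) * (n - j)) * gauss_binom qvar n j * gauss_binom qvar r (s - j) * g j)"
proof -
  have "(\<Sum>j\<in>{j. j \<le> s \<and> int j \<le> int n}. qvar ^ nat ((int s - int j) * (int n - int j))
      * qbinom (int n) (int j) * qbinom (int r) (int s - int j) * g j)
    = (\<Sum>j\<in>{j. j \<le> s \<and> j \<le> n}.
        qvar ^ ((s - j) * (n - j)) * gauss_binom qvar n j * gauss_binom qvar r (s - j) * g j)"
  proof (rule sum.cong)
    fix j assume "j \<in> {j. j \<le> s \<and> j \<le> n}"
    then have "int s - int j = int (s - j)" and "int n - int j = int (n - j)"
      by auto
    then show "qvar ^ nat ((int s - int j) * (int n - int j)) * qbinom (int n) (int j)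
        * qbinom (int r) (int s - int j) * g j
      = qvar ^ ((s - j) * (n - j)) * gauss_binom qvar n j * gauss_binom qvar r (s - j) * g j"
      by (simp only: qbinom_of_nat nat_int flip: of_nat_mult)
  qed auto
  also have "\<dots> = (\<Sum>j\<le>s. qvar ^ ((s - j) * (n - j)) * gauss_binom qvar n j
      * gauss_binom qvar r (s - j) * g j)"
    by (rule sum.mono_neutral_left) (auto simp: gauss_binom_eq_0 not_le[symmetric])
  finally show ?thesis .
qed

theorem theorem1p1:
  fixes m s t :: nat and e :: int
  assumes "- int t \<le> e" and "e \<le> int s"
  shows "qbinom (int m) (int t) * qbinom (int m + e) (int s) =
    (\<Sum>j\<in>{j::nat. j \<le> s \<and> int j \<le> int t + e}.
       [:0, 1:] ^ nat ((int s - int j) * (int t + e - int j))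
       * qbinom (int t + e) (int j) * qbinom (int s - e) (int s - int j)
       * qbinom (int m + int j) (int s + int t))"
proof -
  obtain n r :: nat where n: "int t + e = int n" and r: "int s - e = int r"
    using assms zero_le_imp_eq_int[of "int t + e"] zero_le_imp_eq_int[of "int s - e"] by auto
  have nr: "n + r = s + t"
    using n r by linarith
  have rhs: "(\<Sum>j\<in>{j. j \<le> s \<and> int j \<le> int t + e}.
       qvar ^ nat ((int s - int j) * (int t + e - int j))
       * qbinom (int t + e) (int j) * qbinom (int s - e) (int s - int j)
       * qbinom (int m + int j) (int s + int t))
    = (\<Sum>j\<le>s. qvar ^ ((s - j) * (n - j)) * gauss_binom qvar n j * gauss_binom qvar r (s - j)
       * gauss_binom qvar (m + j) (s + t))"
    unfolding n r qbinom_of_nat[of "m + _" "s + t", simplified]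
    by (rule qbinom_sum_as_gauss_binom_sum)
  show ?thesis
  proof (cases "t \<le> m")
    case True
    then obtain p where m: "m = p + t"
      using le_Suc_ex by (metis add.commute)
    have "int m + e = int (p + n)"
      using m n by simp
    then have "qbinom (int m) (int t) * qbinom (int m + e) (int s)
        = gauss_binom qvar (p + t) t * gauss_binom qvar (p + n) s"
      by (simp only: m qbinom_of_nat)
    also have "\<dots> = (\<Sum>j\<le>s. qvar ^ ((s - j) * (n - j)) * gauss_binom qvar n j
        * gauss_binom qvar r (s - j) * gauss_binom qvar (m + j) (s + t))"
      unfolding m by (rule gauss_binom_product_expansion[OF nr])
    also note rhs[symmetric]
    finally show ?thesis .
  next
    case False
    then have "gauss_binom qvar (m + j) (s + t) = 0" if "j \<le> s" for j
      using that by (simp add: gauss_binom_eq_0)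
    with False show ?thesis
      unfolding rhs by (simp add: qbinom_of_nat gauss_binom_eq_0)
  qed
qed

end
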